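(* Let $\Omega$, $\mu$, $w$, $\alpha$ and $T_{\alpha,w,\infty}$ be as in the context, let $N\in\mathbb N$, and let $F\subseteq\Omega$ be a Borel set with $0<\mu(F)<\infty$ such that $$\inf\Big\{\prod_{k=1}^n(w\circ\alpha^{-k})(t):\ n\geq N,\ t\in F\Big\}\neq0.$$ Then the set $\{f\in L^\infty(\Omega,\mu):\ \|T^n_{\alpha,w,\infty}f\|_\infty\geq1\ \text{ for all } n\geq N\}$ is not $\sigma$-porous in $L^\infty(\Omega,\mu)$. In particular, the set of all non-hypercyclic vectors of the operator $T_{\alpha,w,\infty}$ is not $\sigma$-porous.
   Context: $\Omega$ is a locally compact Hausdorff space with a nonnegative Radon measure $\mu$; $w:\Omega\to(0,\infty)$ is a bounded measurable function; $\alpha:\Omega\to\Omega$ is a bijective bi-measurable map such that $\|f\circ\alpha\|_\infty=\|f\circ\alpha^{-1}\|_\infty=\|f\|_\infty$ for all $f\in L^\infty(\Omega,\mu)$. Here $\alpha^{-1}$ is the inverse map, $\alpha^{-k}:=(\alpha^{-1})^k$, $\alpha^k$ is the $k$-fold iterate. $T_{\alpha,w,\infty}:L^\infty(\Omega,\mu)\to L^\infty(\Omega,\mu)$ is $T_{\alpha,w,\infty}f:=w\cdot(f\circ\alpha)$. An operator $T$ on a Banach space $\mathcal X$ is hypercyclic if some $x\in\mathcal X$ (a hypercyclic vector) has dense orbit $\{T^nx:n\in\mathbb N_0\}$; non-hypercyclic vectors are those that are not hypercyclic vectors. Porosity: Let $X$ be a metric space and $0<\lambda<1$. A set $E\subseteq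 X$ is $\lambda$-porous at $x\in E$ if for each $\delta>0$ there is $y\in B(x;\delta)\setminus\{x\}$ with $B(y;\lambda\, d(x,y))\cap E=\varnothing$; $E$ is $\lambda$-porous if it is $\lambda$-porous at each of its points; $E$ is $\sigma$-$\lambda$-porous if it is a countable union of $\lambda$-porous subsets of $X$. A set is called $\sigma$-porous if it is $\sigma$-$\lambda$-porous for some $\lambda\in(0,1)$; "not $\sigma$-porous" means not $\sigma$-$\lambda$-porous for any $\lambda\in(0,1)$. *)

theory Defs
  imports "HOL-Analysis.Analysis" "HOL-Probability.Essential_Supremum"
begin

definition radon_measure :: "'a::t2_space measure \<Rightarrow> bool" where
  "radon_measure M \<longleftrightarrow>
     sets M = sets borel \<and>
     (\<forall>K. compact K \<longrightarrow> emeasure M K < \<infinity>) \<and>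
     (\<forall>E \<in> sets borel. emeasure M E = (INF U \<in> {U. open U \<and> E \<subseteq> U}. emeasure M U)) \<and>
     (\<forall>U. open U \<longrightarrow> emeasure M U = (SUP K \<in> {K. compact K \<and> K \<subseteq> U}. emeasure M K))"

definition linf_norm_fun :: "'a measure \<Rightarrow> ('a \<Rightarrow> complex) \<Rightarrow> ereal" where
  "linf_norm_fun M f = esssup M (\<lambda>x. ereal (norm (f x)))"

definition linf_class :: "'a measure \<Rightarrow> ('a \<Rightarrow> complex) \<Rightarrow> ('a \<Rightarrow> complex) set" where
  "linf_class M f = {g \<in> borel_measurable M. AE x in M. g x = f x}"

definition Linf :: "'a measure \<Rightarrow> ('a \<Rightarrow> complex) set set" where
  "Linf M = {linf_class M f | f. f \<in> borel_measurable M \<and> linf_norm_fun M f < \<infinity>}"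

definition rep :: "('a \<Rightarrow> complex) set \<Rightarrow> ('a \<Rightarrow> complex)" where
  "rep F = (SOME f. f \<in> F)"

definition linf_norm :: "'a measure \<Rightarrow> ('a \<Rightarrow> complex) set \<Rightarrow> real" where
  "linf_norm M F = real_of_ereal (linf_norm_fun M (rep F))"

definition linf_dist :: "'a measure \<Rightarrow> ('a \<Rightarrow> complex) set \<Rightarrow> ('a \<Rightarrow> complex) set \<Rightarrow> real" where
  "linf_dist M F G = real_of_ereal (linf_norm_fun M (\<lambda>x. rep F x - rep G x))"

definition wcomp_op :: "'a measure \<Rightarrow> ('a \<Rightarrow> 'a) \<Rightarrow> ('a \<Rightarrow> real) \<Rightarrow>
    ('a \<Rightarrow> complex) set \<Rightarrow> ('a \<Rightarrow> complex) set" where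
  "wcomp_op M \<alpha> w F = linf_class M (\<lambda>x. complex_of_real (w x) * rep F (\<alpha> x))"

definition porous_at :: "'b set \<Rightarrow> ('b \<Rightarrow> 'b \<Rightarrow> real) \<Rightarrow> real \<Rightarrow> 'b set \<Rightarrow> 'b \<Rightarrow> bool" where
  "porous_at X d lam E x \<longleftrightarrow>
     (\<forall>\<delta>>0. \<exists>y\<in>X. d x y < \<delta> \<and> y \<noteq> x \<and> {z \<in> X. d y z < lam * d x y} \<inter> E = {})"

definition lporous :: "'b set \<Rightarrow> ('b \<Rightarrow> 'b \<Rightarrow> real) \<Rightarrow> real \<Rightarrow> 'b set \<Rightarrow> bool" where
  "lporous X d lam E \<longleftrightarrow> E \<subseteq> X \<and> (\<forall>x\<in>E. porous_at X d lam E x)"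

definition sigma_lporous :: "'b set \<Rightarrow> ('b \<Rightarrow> 'b \<Rightarrow> real) \<Rightarrow> real \<Rightarrow> 'b set \<Rightarrow> bool" where
  "sigma_lporous X d lam E \<longleftrightarrow> (\<exists>A :: nat \<Rightarrow> 'b set. (\<forall>i. lporous X d lam (A i)) \<and> E = (\<Union>i. A i))"

definition sigma_porous :: "'b set \<Rightarrow> ('b \<Rightarrow> 'b \<Rightarrow> real) \<Rightarrow> 'b set \<Rightarrow> bool" where
  "sigma_porous X d E \<longleftrightarrow> (\<exists>lam. 0 < lam \<and> lam < 1 \<and> sigma_lporous X d lam E)"

definition hypercyclic_vector :: "'b set \<Rightarrow> ('b \<Rightarrow> 'b \<Rightarrow> real) \<Rightarrow> ('b \<Rightarrow> 'b) \<Rightarrow> 'b \<Rightarrow> bool" where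
  "hypercyclic_vector X d T x \<longleftrightarrow>
     x \<in> X \<and> (\<forall>y\<in>X. \<forall>\<epsilon>>0. \<exists>n::nat. d ((T ^^ n) x) y < \<epsilon>)"

end

theory Submission
  imports Defs
begin

text \<open>Write \<open>P\<^sub>n(t) = w(\<alpha>\<^sup>-\<^sup>1 t) \<cdots> w(\<alpha>\<^sup>-\<^sup>n t)\<close> and let \<open>L > 0\<close> bound \<open>P\<^sub>n\<close> from
  below on \<open>F\<close> for all \<open>n\<close>; for \<open>n < N\<close> such a bound follows from the one for \<open>n \<ge> N\<close>
  because \<open>w\<close> is bounded. Every \<open>g\<close> in the unit ball around \<open>(1 + 1/L) \<one>\<^sub>F\<close> satisfies
  \<open>|g| \<ge> 1/L\<close> on \<open>F\<close>, and \<open>(T\<^sup>n g)(\<alpha>\<^sup>-\<^sup>n t) = P\<^sub>n(t) g(t)\<close>. Since \<open>\<alpha>\<close> preserves null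
  sets and \<open>\<mu>(F) > 0\<close>, this gives \<open>\<parallel>T\<^sup>n g\<parallel>\<^sub>\<infinity> \<ge> 1\<close> for all \<open>n\<close>. So a whole ball lies in
  the first set and, as these orbits stay away from \<open>0\<close>, in the set of non-hypercyclic
  vectors. Porous sets are nowhere dense, so by Baire's theorem no set containing a ball of
  the complete space \<open>L\<^sup>\<infinity>\<close> is \<open>\<sigma>\<close>-porous.\<close>

section \<open>Porous sets\<close>

lemma (in Metric_space) interior_of_closure_of_lporous:
  assumes lp: "lporous M d lam A" and lam: "0 < lam"
  shows "mtopology interior_of (mtopology closure_of A) = {}"
proof -
  have AX: "A \<subseteq> M"
    using lp unfolding lporous_def by blast
  have "z \<notin> mtopology interior_of (mtopology closure_of A)" for z
  proof
    assume z: "z \<in> mtopology interior_of (mtopology closure_of A)"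
    moreover have "openin mtopology (mtopology interior_of (mtopology closure_of A))"
      by (rule openin_interior_of)
    ultimately have "\<exists>s>0. mball z s \<subseteq> mtopology interior_of (mtopology closure_of A)"
      unfolding openin_mtopology by blast
    then obtain s where "0 < s" "mball z s \<subseteq> mtopology interior_of (mtopology closure_of A)"
      by blast
    then have s: "0 < s" "mball z s \<subseteq> mtopology closure_of A"
      using interior_of_subset[of mtopology "mtopology closure_of A"] by auto
    have zX: "z \<in> M"
      using z interior_of_subset_topspace[of mtopology] by auto
    then have "z \<in> mball z s"
      using s(1) by simp
    then have "\<forall>r>0. \<exists>a\<in>A. a \<in> mball z r"
      using s(2) unfolding metric_closure_of by blast
    then obtain a where a: "a \<in> A" "a \<in> mball z (s / 2)"
      using s(1) half_gt_zero by blast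
    have "porous_at M d lam A a"
      using lp a(1) unfolding lporous_def by blast
    then obtain y where y: "y \<in> M" "d a y < s / 2" "y \<noteq> a"
      and hole: "{u \<in> M. d y u < lam * d a y} \<inter> A = {}"
      using s(1) unfolding porous_at_def by (elim allE[where x = "s / 2"]) auto
    have aX: "a \<in> M"
      using a AX by blast
    have "d z y < s"
      using triangle[OF zX aX y(1)] a(2) y(2) by simp
    then have "y \<in> mtopology closure_of A"
      using s(2) zX y(1) by (simp add: subset_iff)
    moreover have "0 < lam * d a y"
      using lam y aX by simp
    ultimately obtain u where "u \<in> A" "u \<in> mball y (lam * d a y)"
      unfolding metric_closure_of by blast
    then show False
      using hole by auto
  qed
  then show ?thesis
    by blast
qed

lemma (in Metric_space) not_sigma_porous_if_mball_subset:
  assumes complete: "mcomplete" and x: "x \<in> M" and r: "0 < r" and sub: "mball x r \<subseteq> E"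
  shows "\<not> sigma_porous M d E"
proof
  assume "sigma_porous M d E"
  then obtain lam and A :: "nat \<Rightarrow> 'a set" where lam: "0 < lam"
    and lp: "\<And>i. lporous M d lam (A i)" and E: "E = (\<Union>i. A i)"
    unfolding sigma_porous_def sigma_lporous_def by blast
  let ?G = "range (\<lambda>i. mtopology closure_of A i)"
  have "mtopology interior_of \<Union>?G = {}"
    using interior_of_closure_of_lporous[OF lp lam]
    by (intro metric_Baire_category_alt[OF complete]) auto
  moreover have "mball x r \<subseteq> mtopology interior_of \<Union>?G"
  proof (rule interior_of_maximal)
    have "A i \<subseteq> mtopology closure_of A i" for i
      using lp[of i] unfolding lporous_def by (simp add: closure_of_subset)
    then show "mball x r \<subseteq> \<Union>?G"
      using sub E by blast
  qed simp
  ultimately show False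
    using x r by auto
qed

lemma not_hypercyclic_vector_if_orbit_avoids_ball:
  assumes "y \<in> X" "0 < r" "\<And>n. r \<le> d ((T ^^ n) x) y"
  shows "\<not> hypercyclic_vector X d T x"
  using assms unfolding hypercyclic_vector_def by (auto simp: not_less)

section \<open>The metric space \<open>L\<^sup>\<infinity>\<close>\<close>

lemma linf_norm_fun_AE_cong:
  assumes "f \<in> borel_measurable M" "g \<in> borel_measurable M" "AE x in M. f x = g x"
  shows "linf_norm_fun M f = linf_norm_fun M g"
  unfolding linf_norm_fun_def using assms by (intro esssup_AE_cong) auto

lemma AE_norm_le_linf_norm_fun: "AE x in M. ereal (norm (f x)) \<le> linf_norm_fun M f"
  unfolding linf_norm_fun_def by (rule esssup_AE)

lemma linf_norm_fun_le:
  assumes "f \<in> borel_measurable M" "AE x in M. norm (f x) \<le> c"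
  shows "linf_norm_fun M f \<le> ereal c"
  unfolding linf_norm_fun_def using assms by (intro esssup_I) auto

lemma linf_norm_fun_nonneg:
  assumes "emeasure M (space M) \<noteq> 0"
  shows "0 \<le> linf_norm_fun M f"
proof (cases "(\<lambda>x. ereal (norm (f x))) \<in> borel_measurable M")
  case True
  then have "esssup M (\<lambda>x. 0) \<le> linf_norm_fun M f"
    unfolding linf_norm_fun_def by (intro esssup_mono) auto
  moreover have "esssup M (\<lambda>x. 0 :: ereal) = 0"
    by (rule esssup_const[OF assms])
  ultimately show ?thesis
    by simp
qed (simp add: linf_norm_fun_def esssup_non_measurable)

lemma AE_norm_le_linf_norm_fun_real:
  assumes "linf_norm_fun M f < \<infinity>"
  shows "AE x in M. norm (f x) \<le> real_of_ereal (linf_norm_fun M f)"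
  using AE_norm_le_linf_norm_fun[where M = M and f = f]
proof eventually_elim
  case (elim x)
  then show ?case
    using assms by (cases "linf_norm_fun M f") auto
qed

lemma linf_class_cong:
  assumes "AE x in M. f x = g x"
  shows "linf_class M f = linf_class M g"
proof -
  have "(AE x in M. h x = f x) \<longleftrightarrow> (AE x in M. h x = g x)" for h
  proof
    assume "AE x in M. h x = f x"
    then show "AE x in M. h x = g x"
      using assms by eventually_elim simp
  next
    assume "AE x in M. h x = g x"
    then show "AE x in M. h x = f x"
      using assms by eventually_elim simp
  qed
  then show ?thesis
    unfolding linf_class_def by blast
qed

lemma rep_linf_class:
  assumes "f \<in> borel_measurable M"
  shows "rep (linf_class M f) \<in> borel_measurable M" "AE x in M. rep (linf_class M f) x = f x"
proof -
  have "f \<in> linf_class M f"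
    using assms unfolding linf_class_def by simp
  then have "rep (linf_class M f) \<in> linf_class M f"
    unfolding rep_def by (rule someI[of "\<lambda>g. g \<in> linf_class M f"])
  then show "rep (linf_class M f) \<in> borel_measurable M" "AE x in M. rep (linf_class M f) x = f x"
    unfolding linf_class_def by auto
qed

lemma LinfD:
  assumes "F \<in> Linf M"
  shows "rep F \<in> borel_measurable M" "linf_norm_fun M (rep F) < \<infinity>" "F = linf_class M (rep F)"
    "AE x in M. norm (rep F x) \<le> linf_norm M F"
proof -
  obtain f where f: "f \<in> borel_measurable M" "linf_norm_fun M f < \<infinity>" "F = linf_class M f"
    using assms unfolding Linf_def by blast
  show meas: "rep F \<in> borel_measurable M"
    using rep_linf_class(1)[OF f(1)] f(3) by simp
  have ae: "AE x in M. rep F x = f x"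
    using rep_linf_class(2)[OF f(1)] f(3) by simp
  show fin: "linf_norm_fun M (rep F) < \<infinity>"
    using linf_norm_fun_AE_cong[OF meas f(1) ae] f(2) by simp
  show "F = linf_class M (rep F)"
    using linf_class_cong[OF ae] f(3) by simp
  show "AE x in M. norm (rep F x) \<le> linf_norm M F"
    unfolding linf_norm_def by (rule AE_norm_le_linf_norm_fun_real[OF fin])
qed

lemma LinfI:
  assumes "f \<in> borel_measurable M" "AE x in M. norm (f x) \<le> c"
  shows "linf_class M f \<in> Linf M"
proof -
  have "linf_norm_fun M f < \<infinity>"
    by (rule le_less_trans[OF linf_norm_fun_le[OF assms]]) simp
  then show ?thesis
    unfolding Linf_def using assms(1) by blast
qed

lemma AE_norm_diff_le_linf_dist:
  assumes F: "F \<in> Linf M" and G: "G \<in> Linf M"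
  shows "AE x in M. norm (rep F x - rep G x) \<le> linf_dist M F G"
proof -
  have meas: "(\<lambda>x. rep F x - rep G x) \<in> borel_measurable M"
    using LinfD(1)[OF F] LinfD(1)[OF G] by simp
  have "AE x in M. norm (rep F x - rep G x) \<le> linf_norm M F + linf_norm M G"
    using LinfD(4)[OF F] LinfD(4)[OF G]
  proof eventually_elim
    case (elim x)
    then show ?case
      using norm_triangle_ineq4[of "rep F x" "rep G x"] by linarith
  qed
  then have "linf_norm_fun M (\<lambda>x. rep F x - rep G x) < \<infinity>"
    by (rule le_less_trans[OF linf_norm_fun_le[OF meas]]) simp
  then show ?thesis
    unfolding linf_dist_def by (rule AE_norm_le_linf_norm_fun_real)
qed

lemma linf_dist_le:
  assumes "F \<in> Linf M" "G \<in> Linf M" "AE x in M. norm (rep F x - rep G x) \<le> c" "0 \<le> c"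
  shows "linf_dist M F G \<le> c"
proof -
  have "(\<lambda>x. rep F x - rep G x) \<in> borel_measurable M"
    using LinfD(1)[OF assms(1)] LinfD(1)[OF assms(2)] by simp
  from linf_norm_fun_le[OF this assms(3)] show ?thesis
    unfolding linf_dist_def using assms(4) by (cases "linf_norm_fun M (\<lambda>x. rep F x - rep G x)") auto
qed

lemma linf_dist_nonneg:
  assumes "emeasure M (space M) \<noteq> 0"
  shows "0 \<le> linf_dist M F G"
  unfolding linf_dist_def by (rule real_of_ereal_pos[OF linf_norm_fun_nonneg[OF assms]])

lemma Metric_space_Linf:
  assumes pos: "emeasure M (space M) \<noteq> 0"
  shows "Metric_space (Linf M) (linf_dist M)"
proof
  fix F G H
  show "0 \<le> linf_dist M F G"
    by (rule linf_dist_nonneg[OF pos])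
  show "linf_dist M F G = linf_dist M G F"
    unfolding linf_dist_def linf_norm_fun_def by (simp add: norm_minus_commute)
  assume F: "F \<in> Linf M" and G: "G \<in> Linf M"
  show "linf_dist M F G = 0 \<longleftrightarrow> F = G"
  proof
    assume d0: "linf_dist M F G = 0"
    have "AE x in M. rep F x = rep G x"
      using AE_norm_diff_le_linf_dist[OF F G] by eventually_elim (simp add: d0)
    then have "linf_class M (rep F) = linf_class M (rep G)"
      by (rule linf_class_cong)
    then show "F = G"
      using LinfD(3)[OF F] LinfD(3)[OF G] by simp
  next
    assume "F = G"
    then show "linf_dist M F G = 0"
      using linf_dist_le[OF F G, of 0] linf_dist_nonneg[OF pos, of F G] by simp
  qed
  assume H: "H \<in> Linf M"
  have "AE x in M. norm (rep F x - rep H x) \<le> linf_dist M F G + linf_dist M G H"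
    using AE_norm_diff_le_linf_dist[OF F G] AE_norm_diff_le_linf_dist[OF G H]
  proof eventually_elim
    case (elim x)
    have "norm (rep F x - rep H x) \<le> norm (rep F x - rep G x) + norm (rep G x - rep H x)"
      using norm_triangle_ineq[of "rep F x - rep G x" "rep G x - rep H x"] by simp
    with elim show ?case
      by linarith
  qed
  then show "linf_dist M F H \<le> linf_dist M F G + linf_dist M G H"
    by (rule linf_dist_le[OF F H]) (simp add: linf_dist_nonneg[OF pos])
qed

lemma linf_dist_zero_class:
  assumes G: "G \<in> Linf M"
  shows "linf_dist M G (linf_class M (\<lambda>_. 0)) = linf_norm M G"
proof -
  let ?Z = "linf_class M (\<lambda>_. 0)"
  have "rep ?Z \<in> borel_measurable M"
    by (rule rep_linf_class(1)) simp
  then have meas: "(\<lambda>x. rep G x - rep ?Z x) \<in> borel_measurable M"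
    using LinfD(1)[OF G] by (intro borel_measurable_diff)
  have "AE x in M. rep G x - rep ?Z x = rep G x"
    using rep_linf_class(2)[OF borel_measurable_const] by eventually_elim simp
  from linf_norm_fun_AE_cong[OF meas LinfD(1)[OF G] this] show ?thesis
    unfolding linf_dist_def linf_norm_def by simp
qed

lemma AE_uniform_Cauchy_limit:
  fixes f :: "nat \<Rightarrow> 'a \<Rightarrow> 'b::{banach, second_countable_topology}"
  assumes meas: "\<And>n. f n \<in> borel_measurable M"
    and bound: "AE x in M. \<forall>n m. norm (f n x - f m x) \<le> c n m"
    and Cauchy: "\<And>e. 0 < e \<Longrightarrow> \<exists>K. \<forall>n\<ge>K. \<forall>m\<ge>K. c n m < e"
  shows "\<exists>g\<in>borel_measurable M. \<forall>e>0. \<exists>K. \<forall>n\<ge>K. AE x in M. norm (f n x - g x) \<le> e"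
proof (intro bexI allI impI)
  define g where "g x = lim (\<lambda>i. f i x)" for x
  show "g \<in> borel_measurable M"
    unfolding g_def using meas by (rule borel_measurable_lim_metric)
  have conv: "AE x in M. (\<lambda>i. f i x) \<longlonglongrightarrow> g x"
    using bound
  proof eventually_elim
    case (elim x)
    have "Cauchy (\<lambda>i. f i x)"
    proof (rule CauchyI)
      fix e :: real
      assume "0 < e"
      then obtain K where K: "\<forall>n\<ge>K. \<forall>m\<ge>K. c n m < e"
        using Cauchy by blast
      show "\<exists>K. \<forall>m\<ge>K. \<forall>n\<ge>K. norm (f m x - f n x) < e"
      proof (intro exI allI impI)
        fix m n
        assume "K \<le> m" "K \<le> n"
        then show "norm (f m x - f n x) < e"
          using K elim[rule_format, of m n] by force
      qed
    qed
    then show ?case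
      unfolding g_def by (simp add: Cauchy_convergent_iff convergent_LIMSEQ_iff)
  qed
  fix e :: real
  assume "0 < e"
  then obtain K where K: "\<forall>n\<ge>K. \<forall>m\<ge>K. c n m < e"
    using Cauchy by blast
  have "AE x in M. norm (f n x - g x) \<le> e" if n: "K \<le> n" for n
    using bound conv
  proof eventually_elim
    case (elim x)
    have "(\<lambda>m. norm (f n x - f m x)) \<longlonglongrightarrow> norm (f n x - g x)"
      using elim(2) by (intro tendsto_intros)
    moreover have "\<forall>m\<ge>K. norm (f n x - f m x) \<le> e"
    proof (intro allI impI)
      fix m
      assume "K \<le> m"
      then show "norm (f n x - f m x) \<le> e"
        using elim(1)[rule_format, of n m] K n by force
    qed
    ultimately show ?case
      by (intro LIMSEQ_le_const2) auto
  qed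
  then show "\<exists>K. \<forall>n\<ge>K. AE x in M. norm (f n x - g x) \<le> e"
    by blast
qed

lemma mcomplete_Linf:
  assumes pos: "emeasure M (space M) \<noteq> 0"
  shows "Metric_space.mcomplete (Linf M) (linf_dist M)"
  unfolding Metric_space.mcomplete_def[OF Metric_space_Linf[OF pos]]
proof (intro allI impI)
  interpret Metric_space "Linf M" "linf_dist M"
    by (rule Metric_space_Linf[OF pos])
  fix \<sigma>
  assume "MCauchy \<sigma>"
  then have \<sigma>: "\<And>n. \<sigma> n \<in> Linf M"
    and Cauchy: "\<And>e. 0 < e \<Longrightarrow> \<exists>K. \<forall>n\<ge>K. \<forall>m\<ge>K. linf_dist M (\<sigma> n) (\<sigma> m) < e"
    unfolding MCauchy_def by auto
  have "AE x in M. \<forall>n m. norm (rep (\<sigma> n) x - rep (\<sigma> m) x) \<le> linf_dist M (\<sigma> n) (\<sigma> m)"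
    using AE_norm_diff_le_linf_dist[OF \<sigma> \<sigma>] by (simp add: AE_all_countable)
  from AE_uniform_Cauchy_limit[OF LinfD(1)[OF \<sigma>] this Cauchy]
  obtain g where g: "g \<in> borel_measurable M"
    and unif: "\<And>e. 0 < e \<Longrightarrow> \<exists>K. \<forall>n\<ge>K. AE x in M. norm (rep (\<sigma> n) x - g x) \<le> e"
    by blast
  obtain K where K: "AE x in M. norm (rep (\<sigma> K) x - g x) \<le> 1"
    using unif[of 1] by auto
  have "AE x in M. norm (g x) \<le> linf_norm M (\<sigma> K) + 1"
    using K LinfD(4)[OF \<sigma>[of K]]
  proof eventually_elim
    case (elim x)
    then show ?case
      using norm_triangle_ineq4[of "rep (\<sigma> K) x" "rep (\<sigma> K) x - g x"] by simp
  qed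
  then have G: "linf_class M g \<in> Linf M"
    by (rule LinfI[OF g])
  have "limitin mtopology \<sigma> (linf_class M g) sequentially"
    unfolding limitin_metric eventually_sequentially
  proof (intro conjI allI impI G)
    fix e :: real
    assume e: "0 < e"
    then obtain K where K: "\<forall>n\<ge>K. AE x in M. norm (rep (\<sigma> n) x - g x) \<le> e / 2"
      using unif[of "e / 2"] by auto
    have "linf_dist M (\<sigma> n) (linf_class M g) < e" if "K \<le> n" for n
    proof -
      have "AE x in M. norm (rep (\<sigma> n) x - g x) \<le> e / 2"
        using K that by blast
      then have "AE x in M. norm (rep (\<sigma> n) x - rep (linf_class M g) x) \<le> e / 2"
        using rep_linf_class(2)[OF g] by eventually_elim simp
      then have "linf_dist M (\<sigma> n) (linf_class M g) \<le> e / 2"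
        using e by (intro linf_dist_le[OF \<sigma> G]) auto
      then show ?thesis
        using e by linarith
    qed
    then show "\<exists>K. \<forall>n\<ge>K. \<sigma> n \<in> Linf M \<and> linf_dist M (\<sigma> n) (linf_class M g) < e"
      using \<sigma> by blast
  qed
  then show "\<exists>x. limitin mtopology \<sigma> x sequentially"
    by blast
qed

lemma AE_in_nonnull_const:
  assumes "A \<in> sets M" "emeasure M A \<noteq> 0" "AE x in M. x \<in> A \<longrightarrow> P"
  shows P
proof (rule ccontr)
  assume "\<not> P"
  then have "AE x in M. x \<notin> A"
    using assms(3) by simp
  then show False
    using assms(1,2) AE_iff_null_sets by blast
qed

text \<open>Applied to the indicator of a null set \<open>Z\<close>, the invariance of the norm shows that
  \<open>\<beta>\<^sup>-\<^sup>1(Z)\<close> is null as well.\<close>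
lemma AE_comp_if_linf_norm_fun_invariant:
  assumes space: "space M = UNIV"
    and invariant: "\<And>f. f \<in> borel_measurable M \<Longrightarrow> linf_norm_fun M f < \<infinity> \<Longrightarrow>
                     linf_norm_fun M (f \<circ> \<beta>) = linf_norm_fun M f"
    and P: "AE x in M. P x"
  shows "AE x in M. P (\<beta> x)"
proof -
  obtain Z where Z: "{x \<in> space M. \<not> P x} \<subseteq> Z" "emeasure M Z = 0" "Z \<in> sets M"
    using P by (rule AE_E)
  have [measurable]: "Z \<in> sets M"
    by (rule Z(3))
  define h where "h x = complex_of_real (indicator Z x)" for x
  have meas: "h \<in> borel_measurable M"
    unfolding h_def by measurable
  have "AE x in M. x \<notin> Z"
    using Z(2,3) by (intro AE_not_in null_setsI)
  then have "AE x in M. norm (h x) \<le> 0"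
    by eventually_elim (simp add: h_def)
  then have h0: "linf_norm_fun M h \<le> 0"
    using linf_norm_fun_le[OF meas] by (simp add: zero_ereal_def)
  moreover have "linf_norm_fun M h < \<infinity>"
    by (rule le_less_trans[OF h0]) simp
  ultimately have le0: "linf_norm_fun M (h \<circ> \<beta>) \<le> 0"
    using invariant[OF meas] by simp
  have "AE x in M. ereal (norm (h (\<beta> x))) \<le> 0"
    using AE_norm_le_linf_norm_fun[where M = M and f = "h \<circ> \<beta>"]
  proof eventually_elim
    case (elim x)
    then show ?case
      using order_trans[OF elim le0] by simp
  qed
  then show ?thesis
  proof eventually_elim
    case (elim x)
    then have "\<beta> x \<notin> Z"
      by (auto simp: h_def split: split_indicator)
    then show ?case
      using Z(1) space by auto
  qed
qed

section \<open>Weighted composition operators\<close>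

locale weighted_composition =
  fixes M :: "'a measure" and w :: "'a \<Rightarrow> real" and \<alpha> :: "'a \<Rightarrow> 'a" and B :: real
  assumes space_eq: "space M = UNIV"
    and w_meas: "w \<in> borel_measurable M"
    and w_pos: "\<And>x. 0 < w x"
    and w_le: "\<And>x. w x \<le> B"
    and one_le_B: "1 \<le> B"
    and \<alpha>_bij: "bij \<alpha>"
    and \<alpha>_meas: "\<alpha> \<in> measurable M M"
    and \<alpha>_norm: "\<And>f. f \<in> borel_measurable M \<Longrightarrow> linf_norm_fun M f < \<infinity> \<Longrightarrow>
                   linf_norm_fun M (f \<circ> \<alpha>) = linf_norm_fun M f \<and>
                   linf_norm_fun M (f \<circ> inv \<alpha>) = linf_norm_fun M f"
begin

abbreviation T :: "('a \<Rightarrow> complex) set \<Rightarrow> ('a \<Rightarrow> complex) set" where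
  "T \<equiv> wcomp_op M \<alpha> w"

definition weight_prod :: "nat \<Rightarrow> 'a \<Rightarrow> real" where
  "weight_prod n x = (\<Prod>k=1..n. w ((inv \<alpha> ^^ k) x))"

lemma weight_prod_Suc: "weight_prod (Suc n) x = weight_prod n x * w ((inv \<alpha> ^^ Suc n) x)"
  unfolding weight_prod_def by simp

lemma weight_prod_pos: "0 < weight_prod n x"
  unfolding weight_prod_def by (rule prod_pos) (use w_pos in auto)

lemma weight_prod_le:
  assumes "n \<le> m"
  shows "weight_prod m x \<le> weight_prod n x * B ^ (m - n)"
  using assms
proof (induction m rule: dec_induct)
  case (step m)
  have "weight_prod (Suc m) x \<le> weight_prod m x * B"
    unfolding weight_prod_Suc using weight_prod_pos w_le by (simp add: mult_left_mono less_imp_le)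
  also have "\<dots> \<le> weight_prod n x * B ^ (m - n) * B"
    using step.IH one_le_B by (simp add: mult_right_mono)
  also have "\<dots> = weight_prod n x * B ^ (Suc m - n)"
    using step.hyps(1) by (simp add: Suc_diff_le algebra_simps)
  finally show ?case .
qed simp

lemma weight_prod_lower_bound:
  assumes low: "\<And>n. N \<le> n \<Longrightarrow> \<delta> \<le> weight_prod n t"
  shows "\<delta> / B ^ N \<le> weight_prod n t"
proof -
  have BN: "1 \<le> B ^ N"
    using one_le_B by simp
  have "\<delta> \<le> weight_prod n t * B ^ N"
  proof (cases "N \<le> n")
    case True
    then show ?thesis
      using low[OF True] BN weight_prod_pos[of n t]
      by (metis mult.right_neutral mult_left_mono order_trans less_imp_le)
  next
    case False
    have "\<delta> \<le> weight_prod n t * B ^ (N - n)"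
      using low[of N] weight_prod_le[of n N t] False by simp
    also have "\<dots> \<le> weight_prod n t * B ^ N"
      using one_le_B weight_prod_pos[of n t] by (intro mult_left_mono power_increasing) auto
    finally show ?thesis .
  qed
  then show ?thesis
    using BN by (simp add: divide_le_eq)
qed

lemma AE_comp_alpha: "AE x in M. P x \<Longrightarrow> AE x in M. P (\<alpha> x)"
  by (rule AE_comp_if_linf_norm_fun_invariant[OF space_eq]) (use \<alpha>_norm in blast)+

lemma AE_comp_inv_alpha: "AE x in M. P x \<Longrightarrow> AE x in M. P (inv \<alpha> x)"
  by (rule AE_comp_if_linf_norm_fun_invariant[OF space_eq]) (use \<alpha>_norm in blast)+

lemma AE_comp_inv_alpha_funpow: "AE x in M. P x \<Longrightarrow> AE x in M. P ((inv \<alpha> ^^ n) x)"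
proof (induction n arbitrary: P)
  case (Suc n)
  have "AE x in M. P ((inv \<alpha> ^^ n) x)"
    by (rule Suc.IH[OF Suc.prems])
  then have "AE x in M. P ((inv \<alpha> ^^ n) (inv \<alpha> x))"
    by (rule AE_comp_inv_alpha[where P = "\<lambda>y. P ((inv \<alpha> ^^ n) y)"])
  then show ?case
    by (simp add: funpow_swap1)
qed simp

lemma wcomp_op_Linf:
  assumes G: "G \<in> Linf M"
  shows "T G \<in> Linf M" "AE x in M. rep (T G) x = complex_of_real (w x) * rep G (\<alpha> x)"
proof -
  have [measurable]: "rep G \<in> borel_measurable M"
    by (rule LinfD(1)[OF G])
  note [measurable] = w_meas \<alpha>_meas
  have meas: "(\<lambda>x. complex_of_real (w x) * rep G (\<alpha> x)) \<in> borel_measurable M"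
    by measurable
  have "AE x in M. norm (rep G (\<alpha> x)) \<le> linf_norm M G"
    by (rule AE_comp_alpha[OF LinfD(4)[OF G]])
  then have "AE x in M. norm (complex_of_real (w x) * rep G (\<alpha> x)) \<le> B * linf_norm M G"
  proof eventually_elim
    case (elim x)
    have "w x * norm (rep G (\<alpha> x)) \<le> B * linf_norm M G"
      using elim w_le[of x] one_le_B by (intro mult_mono) auto
    then show ?case
      using w_pos[of x] by (simp add: norm_mult)
  qed
  then show "T G \<in> Linf M"
    unfolding wcomp_op_def by (rule LinfI[OF meas])
  show "AE x in M. rep (T G) x = complex_of_real (w x) * rep G (\<alpha> x)"
    unfolding wcomp_op_def by (rule rep_linf_class(2)[OF meas])
qed

lemma funpow_wcomp_op_Linf: "G \<in> Linf M \<Longrightarrow> (T ^^ n) G \<in> Linf M"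
  by (induction n) (simp_all add: wcomp_op_Linf(1))

lemma AE_rep_funpow_wcomp_op:
  assumes G: "G \<in> Linf M"
  shows "AE x in M. rep ((T ^^ n) G) ((inv \<alpha> ^^ n) x) = complex_of_real (weight_prod n x) * rep G x"
proof (induction n)
  case 0
  then show ?case
    by (simp add: weight_prod_def)
next
  case (Suc n)
  have \<alpha>_inv: "\<alpha> (inv \<alpha> y) = y" for y
    using \<alpha>_bij by (simp add: bij_is_surj surj_f_inv_f)
  have "AE x in M. rep (T ((T ^^ n) G)) ((inv \<alpha> ^^ Suc n) x) =
      complex_of_real (w ((inv \<alpha> ^^ Suc n) x)) * rep ((T ^^ n) G) (\<alpha> ((inv \<alpha> ^^ Suc n) x))"
    by (rule AE_comp_inv_alpha_funpow[OF wcomp_op_Linf(2)[OF funpow_wcomp_op_Linf[OF G]]])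
  then show ?case
    using Suc.IH by eventually_elim (simp add: weight_prod_Suc \<alpha>_inv)
qed

lemma one_le_linf_norm_funpow_wcomp_op:
  assumes F: "F \<in> sets M" "emeasure M F \<noteq> 0"
    and L: "0 < L" "\<And>n t. t \<in> F \<Longrightarrow> L \<le> weight_prod n t"
    and G: "G \<in> Linf M" "AE x in M. x \<in> F \<longrightarrow> 1 / L \<le> norm (rep G x)"
  shows "1 \<le> linf_norm M ((T ^^ n) G)"
proof -
  let ?H = "(T ^^ n) G"
  have "AE x in M. norm (rep ?H ((inv \<alpha> ^^ n) x)) \<le> linf_norm M ?H"
    by (rule AE_comp_inv_alpha_funpow[OF LinfD(4)[OF funpow_wcomp_op_Linf[OF G(1)]]])
  then have "AE x in M. x \<in> F \<longrightarrow> 1 \<le> linf_norm M ?H"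
    using AE_rep_funpow_wcomp_op[OF G(1), of n] G(2)
  proof eventually_elim
    case (elim x)
    show ?case
    proof
      assume x: "x \<in> F"
      have "1 = L * (1 / L)"
        using L(1) by simp
      also have "\<dots> \<le> weight_prod n x * norm (rep G x)"
        using L(2)[OF x] elim(3) x L(1) weight_prod_pos[of n x] by (intro mult_mono) auto
      also have "\<dots> = norm (rep ?H ((inv \<alpha> ^^ n) x))"
        using elim(2) weight_prod_pos[of n x] by (simp add: norm_mult)
      also have "\<dots> \<le> linf_norm M ?H"
        by (rule elim(1))
      finally show "1 \<le> linf_norm M ?H" .
    qed
  qed
  then show ?thesis
    by (rule AE_in_nonnull_const[OF F])
qed

lemma ex_unit_ball_funpow_wcomp_op_norm_ge_one:
  assumes F: "F \<in> sets M" "emeasure M F \<noteq> 0"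
    and \<delta>: "0 < \<delta>" and low: "\<And>n t. N \<le> n \<Longrightarrow> t \<in> F \<Longrightarrow> \<delta> \<le> weight_prod n t"
  shows "\<exists>f\<^sub>0\<in>Linf M. \<forall>G\<in>Linf M. linf_dist M f\<^sub>0 G < 1 \<longrightarrow> (\<forall>n. 1 \<le> linf_norm M ((T ^^ n) G))"
proof -
  define L where "L = \<delta> / B ^ N"
  have L: "0 < L" "\<And>n t. t \<in> F \<Longrightarrow> L \<le> weight_prod n t"
    unfolding L_def using \<delta> one_le_B low weight_prod_lower_bound by auto
  define c where "c = 1 + 1 / L"
  have c: "0 < c" "c - 1 = 1 / L"
    unfolding c_def using L(1) by (simp_all add: add_pos_pos)
  let ?f = "\<lambda>x. complex_of_real (c * indicator F x)"
  have [measurable]: "F \<in> sets M"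
    by (rule F(1))
  have meas: "?f \<in> borel_measurable M"
    by measurable
  have "AE x in M. norm (?f x) \<le> c"
    using c(1) by (intro AE_I2) (simp add: indicator_def)
  then have f\<^sub>0: "linf_class M ?f \<in> Linf M"
    by (rule LinfI[OF meas])
  have "1 \<le> linf_norm M ((T ^^ n) G)"
    if G: "G \<in> Linf M" "linf_dist M (linf_class M ?f) G < 1" for G n
  proof (rule one_le_linf_norm_funpow_wcomp_op[OF F L G(1)])
    show "AE x in M. x \<in> F \<longrightarrow> 1 / L \<le> norm (rep G x)"
      using AE_norm_diff_le_linf_dist[OF f\<^sub>0 G(1)] rep_linf_class(2)[OF meas]
    proof eventually_elim
      case (elim x)
      show ?case
      proof
        assume x: "x \<in> F"
        then have "norm (complex_of_real c - rep G x) < 1"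
          using elim G(2) by simp
        moreover have "norm (complex_of_real c) = c"
          using c(1) by simp
        ultimately show "1 / L \<le> norm (rep G x)"
          using norm_triangle_ineq2[of "complex_of_real c" "rep G x"] c(2) by linarith
      qed
    qed
  qed
  then show ?thesis
    using f\<^sub>0 by blast
qed

lemma not_sigma_porous_if_weight_prod_bounded_below:
  assumes F: "F \<in> sets M" "emeasure M F \<noteq> 0"
    and \<delta>: "0 < \<delta>" and low: "\<And>n t. N \<le> n \<Longrightarrow> t \<in> F \<Longrightarrow> \<delta> \<le> weight_prod n t"
  shows "\<not> sigma_porous (Linf M) (linf_dist M)
            {f \<in> Linf M. \<forall>n\<ge>N. linf_norm M ((T ^^ n) f) \<ge> 1}
       \<and> \<not> sigma_porous (Linf M) (linf_dist M)
            {f \<in> Linf M. \<not> hypercyclic_vector (Linf M) (linf_dist M) T f}"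
proof -
  obtain f\<^sub>0 where f\<^sub>0: "f\<^sub>0 \<in> Linf M"
    and far: "\<And>G n. G \<in> Linf M \<Longrightarrow> linf_dist M f\<^sub>0 G < 1 \<Longrightarrow> 1 \<le> linf_norm M ((T ^^ n) G)"
    using ex_unit_ball_funpow_wcomp_op_norm_ge_one[OF F \<delta> low] by blast
  have "emeasure M F \<le> emeasure M (space M)"
    by (rule emeasure_mono[OF _ sets.top]) (simp add: space_eq)
  then have pos: "emeasure M (space M) \<noteq> 0"
    using F(2) by auto
  interpret Linf: Metric_space "Linf M" "linf_dist M"
    by (rule Metric_space_Linf[OF pos])
  have zero: "linf_class M (\<lambda>_. 0) \<in> Linf M"
    by (rule LinfI[of _ _ 0]) auto
  have "G \<in> Linf M" "\<forall>n\<ge>N. 1 \<le> linf_norm M ((T ^^ n) G)"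
    "\<not> hypercyclic_vector (Linf M) (linf_dist M) T G"
    if "G \<in> Linf.mball f\<^sub>0 1" for G
  proof -
    from that have G: "G \<in> Linf M" and "linf_dist M f\<^sub>0 G < 1"
      by simp_all
    then show "G \<in> Linf M"
      by blast
    from G \<open>linf_dist M f\<^sub>0 G < 1\<close> have "1 \<le> linf_norm M ((T ^^ n) G)" for n
      by (rule far)
    then show "\<forall>n\<ge>N. 1 \<le> linf_norm M ((T ^^ n) G)"
      by blast
    show "\<not> hypercyclic_vector (Linf M) (linf_dist M) T G"
      using \<open>1 \<le> linf_norm M ((T ^^ _) G)\<close> linf_dist_zero_class[OF funpow_wcomp_op_Linf[OF G]]
      by (intro not_hypercyclic_vector_if_orbit_avoids_ball[OF zero zero_less_one]) simp
  qed
  then have "Linf.mball f\<^sub>0 1 \<subseteq> {f \<in> Linf M. \<forall>n\<ge>N. linf_norm M ((T ^^ n) f) \<ge> 1}"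
    "Linf.mball f\<^sub>0 1 \<subseteq> {f \<in> Linf M. \<not> hypercyclic_vector (Linf M) (linf_dist M) T f}"
    by blast+
  then show ?thesis
    using Linf.not_sigma_porous_if_mball_subset[OF mcomplete_Linf[OF pos] f\<^sub>0 zero_less_one]
    by blast
qed

end

lemma Inf_pos_if_nonzero:
  fixes S :: "real set"
  assumes "S \<noteq> {}" "\<And>s. s \<in> S \<Longrightarrow> 0 < s" "Inf S \<noteq> 0"
  shows "0 < Inf S" "\<And>s. s \<in> S \<Longrightarrow> Inf S \<le> s"
proof -
  have bdd: "bdd_below S"
    using assms(2) by (meson bdd_belowI less_imp_le)
  show "Inf S \<le> s" if "s \<in> S" for s
    by (rule cInf_lower[OF that bdd])
  have "0 \<le> Inf S"
    using assms(1,2) by (meson cInf_greatest less_imp_le)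
  then show "0 < Inf S"
    using assms(3) by simp
qed
theorem mainTheorem13:
  fixes M :: "'a::t2_space measure"
    and w :: "'a \<Rightarrow> real" and \<alpha> :: "'a \<Rightarrow> 'a"
    and N :: nat and F :: "'a set"
  assumes lch: "locally_compact_space (euclidean :: 'a topology)"
    and radon: "radon_measure M"
    and w_meas: "w \<in> borel_measurable M"
    and w_pos: "\<And>x. w x > 0"
    and w_bdd: "bounded (range w)"
    and \<alpha>_bij: "bij \<alpha>"
    and \<alpha>_meas: "\<alpha> \<in> measurable M M"
    and \<alpha>_inv_meas: "inv \<alpha> \<in> measurable M M"
    and \<alpha>_norm: "\<And>f. f \<in> borel_measurable M \<Longrightarrow> linf_norm_fun M f < \<infinity> \<Longrightarrow>
                   linf_norm_fun M (f \<circ> \<alpha>) = linf_norm_fun M f \<and>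
                   linf_norm_fun M (f \<circ> inv \<alpha>) = linf_norm_fun M f"
    and N_pos: "N \<ge> 1"
    and F_borel: "F \<in> sets borel"
    and F_pos: "0 < emeasure M F" and F_fin: "emeasure M F < \<infinity>"
    and inf_ne: "Inf {\<Prod>k=1..n. w ((inv \<alpha> ^^ k) t) | n t. n \<ge> N \<and> t \<in> F} \<noteq> 0"
  shows "\<not> sigma_porous (Linf M) (linf_dist M)
            {f \<in> Linf M. \<forall>n\<ge>N. linf_norm M ((wcomp_op M \<alpha> w ^^ n) f) \<ge> 1}
       \<and> \<not> sigma_porous (Linf M) (linf_dist M)
            {f \<in> Linf M. \<not> hypercyclic_vector (Linf M) (linf_dist M) (wcomp_op M \<alpha> w) f}"
proof -
  have sets: "sets M = sets borel"
    using radon unfolding radon_measure_def by (elim conjE)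
  then have space: "space M = UNIV"
    using sets_eq_imp_space_eq by force
  have F: "F \<in> sets M" "emeasure M F \<noteq> 0"
    using F_borel F_pos sets by simp_all
  obtain a where a: "\<And>x. norm (w x) \<le> a"
    using w_bdd unfolding bounded_iff by blast
  have w_le: "w x \<le> max 1 a" for x
    using a[of x] abs_ge_self[of "w x"] by (simp add: le_max_iff_disj)
  interpret weighted_composition M w \<alpha> "max 1 a"
    by (rule weighted_composition.intro[OF space w_meas w_pos w_le _ \<alpha>_bij \<alpha>_meas \<alpha>_norm]) simp
  let ?S = "{weight_prod n t | n t. n \<ge> N \<and> t \<in> F}"
  obtain t where "t \<in> F"
    using F(2) by fastforce
  then have "weight_prod N t \<in> ?S"
    by blast
  moreover have "Inf ?S \<noteq> 0"
    using inf_ne unfolding weight_prod_def .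
  ultimately have "0 < Inf ?S" "\<And>s. s \<in> ?S \<Longrightarrow> Inf ?S \<le> s"
    using Inf_pos_if_nonzero[of ?S] weight_prod_pos by blast+
  then show ?thesis
    using not_sigma_porous_if_weight_prod_bounded_below[OF F, of "Inf ?S" N] by blast
qed

end
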